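(* Let $n\ge m\ge 0$ be integers with $n\equiv m \pmod 2$. Then $$\int_{-\infty}^{\infty} f_n(x) f_m(x)\,dx = \binom{n+m}{\frac{n+m}{2}}.$$
   Context: For $A\subseteq\mathbb{R}$, $\chi_A$ denotes the characteristic function of $A$. Define functions $f_n:\mathbb{R}\to\mathbb{R}$, $n = 0,1,2,\dots$, recursively by $f_0 = \chi_{(-1/2,1/2)}$ and $f_{n+1}(x) = f_n(x+1/2) + f_n(x-1/2)$ for all $x\in\mathbb{R}$. *)

theory Defs
  imports "HOL-Analysis.Analysis"
begin

fun f :: "nat \<Rightarrow> real \<Rightarrow> real" where
  "f 0 x = indicator {-1/2<..<1/2} x"
| "f (Suc n) x = f n (x + 1/2) + f n (x - 1/2)"

end

theory Submission
  imports Defs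
begin

text \<open>For integers \<open>k\<close> put \<open>I n m k = \<integral> f n (x + k - (n+m)/2) f m x dx\<close>. Since \<open>f (n+1)\<close> is
  the sum of the two half-unit translates of \<open>f n\<close>, \<open>I\<close> obeys Pascal's rule
  \<open>I (n+1) m k = I n m k + I n m (k-1)\<close>, and likewise in \<open>m\<close> after translating the variable of
  integration. With \<open>I 0 0 k = [k = 0]\<close> this gives \<open>I n m k = (n+m) choose k\<close>; the theorem is
  the centred case \<open>k = (n+m)/2\<close>.\<close>

lemma has_integral_UNIV_translate:
  fixes g :: "real \<Rightarrow> 'b::banach"
  assumes "(g has_integral y) UNIV"
  shows "((\<lambda>x. g (x + c)) has_integral y) UNIV"
proof (rule has_integral'[THEN iffD2], intro allI impI)
  fix e :: real
  assume "e > 0"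
  then obtain B where "B > 0" and B: "\<And>a b. ball 0 B \<subseteq> cbox a b \<Longrightarrow>
      \<exists>z. (g has_integral z) (cbox a b) \<and> norm (z - y) < e"
    using has_integral'[THEN iffD1, OF assms] by auto
  have "\<exists>z. ((\<lambda>x. g (x + c)) has_integral z) (cbox a b) \<and> norm (z - y) < e"
    if ab: "ball 0 (B + \<bar>c\<bar>) \<subseteq> cbox a b" for a b :: real
  proof -
    have "ball 0 B \<subseteq> cbox (a + c) (b + c)"
    proof
      fix x :: real
      assume "x \<in> ball 0 B"
      then have "x - c \<in> ball 0 (B + \<bar>c\<bar>)"
        by (simp add: dist_real_def)
      then have "x - c \<in> cbox a b"
        using ab by blast
      then show "x \<in> cbox (a + c) (b + c)"
        by simp
    qed
    then obtain z where "(g has_integral z) {a + c..b + c}" "norm (z - y) < e"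
      using B by (metis cbox_interval)
    then show ?thesis
      using has_integral_shift_real_ivl[of g z "a + c" "b + c" c] by auto
  qed
  moreover have "B + \<bar>c\<bar> > 0"
    using \<open>B > 0\<close> by simp
  ultimately show "\<exists>B>0. \<forall>a b. ball 0 B \<subseteq> cbox a b \<longrightarrow>
      (\<exists>z. ((\<lambda>x. if x \<in> UNIV then g (x + c) else 0) has_integral z) (cbox a b) \<and> norm (z - y) < e)"
    by auto
qed

definition choose_int :: "nat \<Rightarrow> int \<Rightarrow> real" where
  "choose_int N k = (if 0 \<le> k \<and> k \<le> int N then real (N choose nat k) else 0)"

lemma choose_int_Suc: "choose_int (Suc N) k = choose_int N k + choose_int N (k - 1)"
proof -
  consider "k \<le> 0" | "0 < k \<and> k \<le> int N" | "k = int N + 1" | "k > int N + 1"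
    by linarith
  then show ?thesis
  proof cases
    case 2
    then obtain j where "nat k = Suc j" "nat (k - 1) = j"
      by (intro that[of "nat (k - 1)"]) auto
    with 2 show ?thesis
      by (simp add: choose_int_def)
  next
    case 3
    then have "nat k = Suc N" "nat (k - 1) = N"
      by auto
    with 3 show ?thesis
      by (simp add: choose_int_def)
  qed (auto simp: choose_int_def)
qed

lemma has_integral_f0_translate_f0:
  "((\<lambda>x. f 0 (x + of_int k) * f 0 x) has_integral choose_int 0 k) UNIV"
proof (cases "k = 0")
  case True
  have "((\<lambda>x. 1::real) has_integral 1) {-1/2<..<1/2::real}"
    using has_integral_Icc_iff_Ioo[of "\<lambda>x. 1::real" 1 "-1/2" "1/2"]
      has_integral_const_real[of "1::real" "-1/2" "1/2"] by simp
  then have "((\<lambda>x. if x \<in> {-1/2<..<1/2::real} then 1 else 0) has_integral (1::real)) UNIV"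
    by (simp only: has_integral_restrict_UNIV)
  moreover have "(\<lambda>x. f 0 (x + of_int k) * f 0 x) = (\<lambda>x. if x \<in> {-1/2<..<1/2} then 1 else 0)"
    using True by (auto simp: indicator_def)
  ultimately show ?thesis
    using True by (simp add: choose_int_def)
next
  case False
  then have "\<bar>real_of_int k\<bar> \<ge> 1"
    by linarith
  then have "f 0 (x + of_int k) * f 0 x = 0" for x
    by (auto simp: indicator_def)
  then have "(\<lambda>x. f 0 (x + of_int k) * f 0 x) = (\<lambda>x. 0)"
    by (rule ext)
  moreover have "choose_int 0 k = 0"
    using False by (simp add: choose_int_def)
  ultimately show ?thesis
    by simp
qed

lemma has_integral_f0_shift_f:
  "((\<lambda>x. f 0 (x + of_int k - real m / 2) * f m x) has_integral choose_int m k) UNIV"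
proof (induction m arbitrary: k)
  case 0
  then show ?case
    using has_integral_f0_translate_f0 by simp
next
  case (Suc m)
  have arg: "x + 1/2 + of_int (k - 1) - real m / 2 = x + of_int k - real (Suc m) / 2"
    "x - 1/2 + of_int k - real m / 2 = x + of_int k - real (Suc m) / 2"
    "x + - 1/2 = x - 1/2" for x :: real
    by (simp_all add: field_simps)
  have "((\<lambda>x. f 0 (x + of_int k - real (Suc m) / 2) * f m (x + 1/2))
      has_integral choose_int m (k - 1)) UNIV"
    using has_integral_UNIV_translate[OF Suc.IH[of "k - 1"], of "1/2"] by (simp only: arg)
  moreover have "((\<lambda>x. f 0 (x + of_int k - real (Suc m) / 2) * f m (x - 1/2))
      has_integral choose_int m k) UNIV"
    using has_integral_UNIV_translate[OF Suc.IH[of k], of "- 1/2"] by (simp only: arg)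
  ultimately show ?case
    unfolding f.simps(2) distrib_left choose_int_Suc add.commute[of "choose_int m k"]
    by (rule has_integral_add)
qed

lemma has_integral_f_shift_f:
  "((\<lambda>x. f n (x + of_int k - real (n + m) / 2) * f m x) has_integral choose_int (n + m) k) UNIV"
proof (induction n arbitrary: k)
  case 0
  then show ?case
    using has_integral_f0_shift_f by simp
next
  case (Suc n)
  have "x + of_int k - real (Suc n + m) / 2 + 1/2 = x + of_int k - real (n + m) / 2"
    and "x + of_int k - real (Suc n + m) / 2 - 1/2 = x + of_int (k - 1) - real (n + m) / 2"
    for x :: real
    by (simp_all add: field_simps)
  then show ?case
    using has_integral_add[OF Suc.IH Suc.IH]
    by (simp only: f.simps distrib_right choose_int_Suc add_Suc)
qed

theorem mainTheorem5:
  fixes n m :: nat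
  assumes "m \<le> n" and "n mod 2 = m mod 2"
  shows "((\<lambda>x. f n x * f m x) has_integral real ((n + m) choose ((n + m) div 2))) UNIV"
proof -
  define k where "k = (n + m) div 2"
  have "n + m = 2 * k"
    using assms(2) unfolding k_def by presburger
  then have centred: "x + of_int (int k) - real (n + m) / 2 = x" for x
    by simp
  have "((\<lambda>x. f n x * f m x) has_integral choose_int (n + m) (int k)) UNIV"
    using has_integral_f_shift_f[of n "int k" m] by (simp only: centred)
  moreover have "choose_int (n + m) (int k) = real ((n + m) choose k)"
    by (simp add: choose_int_def \<open>n + m = 2 * k\<close>)
  ultimately show ?thesis
    by (simp add: k_def)
qed

end
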